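(* If $f$ satisfies the rate conditions of order $0$, then for every $z\in D$, $f\left(\overline{J_{cu}(z,L)}\cap\bigl(\overline B_c(\pi_\lambda z,R_\Lambda)\times\overline B_u(R)\times\overline B_s(R)\bigr)\right)\subset J_{cu}(f(z),L)$.
   Context: $c,u,s$ positive integers, $\Lambda=(\mathbb{R}/\mathbb{Z})^c$, $R_\Lambda=\tfrac12$; points are "in the same chart" if their $\lambda$-components have lifts to $\mathbb{R}^c$ at distance $\le R_\Lambda$; differences, norms, cones and derivatives are computed in such lifts, and $\overline B_c(\lambda,R_\Lambda)$ is the closed ball of radius $R_\Lambda$ about a lift of $\lambda$. $\overline B_n(R)$ closed ball at $0$ in $\mathbb{R}^n$; Euclidean norms. $0<R<R_\Lambda/2$, $D=\Lambda\times\overline B_u(R)\times\overline B_s(R)$, $z=(\lambda,x,y)$, projections $\pi_\lambda,\pi_x,\pi_y,\pi_{(\lambda,x)}$; $f:D\to\Lambda\times\mathbb{R}^u\times\mathbb{R}^s$ is $C^1$, $f=(f_\lambda,f_x,f_y)$. $m(A)=\max\{c:\|Av\|\ge c\|v\|\}$, $m(\mathbf A)=\inf_{A\in\mathbf A}m(A)$; $[\partial g/\partial w(U)]$ = set of matrices with $(i,j)$ entry in $[\inf_U\partial g_i/\partial w_j,\sup_U\partial g_i/\partial w_j]$; $P(z)=\{w\in D:\|\pi_\lambda w-\pi_\lambda z\|\le R_\Lambda/2\}$. Fix $L\in(2R/R_\Lambda,1)$. $\mu_{s,1}=\sup_D\{\|\partial_yf_y\|+\frac1L\|\partial_{(\lambda,x)}f_y\|\}$,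 $\xi_{u,1,P}=\inf_{z\in D}m[\partial_xf_x(P(z))]-\frac1L\sup_D\|\partial_{(\lambda,y)}f_x\|$, $\mu_{cs,1}=\sup_D\{\|\partial_{(\lambda,y)}f_{(\lambda,y)}\|+L\|\partial_xf_{(\lambda,y)}\|\}$, $\xi_{cu,1,P}=\inf_{z\in D}m[\partial_{(\lambda,x)}f_{(\lambda,x)}(P(z))]-L\sup_D\|\partial_yf_{(\lambda,x)}\|$. Rate conditions of order $0$: $\mu_{s,1}<1<\xi_{u,1,P}$, $\mu_{cs,1}<\xi_{u,1,P}$, $\mu_{s,1}<\xi_{cu,1,P}$. Center-unstable cone: $J_{cu}(z,M)=\{(\lambda,x,y):\|y-\pi_yz\|<M\|(\lambda,x)-\pi_{(\lambda,x)}z\|\}\cup\{z\}$. *)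

theory Defs
  imports "HOL-Analysis.Analysis"
begin

text \<open>We work in the universal cover: the torus component \<open>\<Lambda> = (R/Z)^c\<close> is
represented by its lift \<open>real^'c\<close>, and the map f by a lift F that is
Z^c-equivariant in the sense of lifts of torus maps.\<close>

type_synonym ('c,'u,'s) pt = "(real^'c) \<times> (real^'u) \<times> (real^'s)"

definition Dom :: "real \<Rightarrow> ('c::finite,'u::finite,'s::finite) pt set" where
  "Dom R = UNIV \<times> cball 0 R \<times> cball 0 R"

text \<open>\<open>P(z) = {w \<in> D. |\<lambda>_w - \<lambda>_z| \<le> R_\<Lambda>/2}\<close>, with \<open>R_\<Lambda> = 1/2\<close>.\<close>
definition Pset :: "real \<Rightarrow> ('c::finite,'u::finite,'s::finite) pt \<Rightarrow> ('c,'u,'s) pt set" where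
  "Pset R z = {w \<in> Dom R. norm (fst w - fst z) \<le> 1/4}"

definition mlow :: "('a::real_normed_vector \<Rightarrow> 'b::real_normed_vector) \<Rightarrow> real" where
  "mlow A = Sup {c. \<forall>v. c * norm v \<le> norm (A v)}"

definition mset :: "('a::real_normed_vector \<Rightarrow> 'b::real_normed_vector) set \<Rightarrow> real" where
  "mset S = Inf (mlow ` S)"

text \<open>Interval matrix \<open>[\<partial>g/\<partial>w(U)]\<close>: all (linear maps = matrices) whose (i,j) entry,
w.r.t. the standard bases, lies between the inf and sup over U of the
corresponding entry of the derivative G.\<close>
definition ihull :: "'w set \<Rightarrow> ('w \<Rightarrow> 'a::euclidean_space \<Rightarrow> 'b::euclidean_space) \<Rightarrow> ('a \<Rightarrow> 'b) set" where
  "ihull U G = {A. linear A \<and> (\<forall>i\<in>Basis. \<forall>j\<in>Basis.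
      (INF w\<in>U. G w j \<bullet> i) \<le> A j \<bullet> i \<and> A j \<bullet> i \<le> (SUP w\<in>U. G w j \<bullet> i))}"

definition d_y_fy :: "(('c::finite,'u::finite,'s::finite) pt \<Rightarrow> ('c,'u,'s) pt \<Rightarrow> ('c,'u,'s) pt)
    \<Rightarrow> ('c,'u,'s) pt \<Rightarrow> real^'s \<Rightarrow> real^'s" where
  "d_y_fy F' w = (\<lambda>v. snd (snd (F' w (0, 0, v))))"

definition d_lx_fy :: "(('c::finite,'u::finite,'s::finite) pt \<Rightarrow> ('c,'u,'s) pt \<Rightarrow> ('c,'u,'s) pt)
    \<Rightarrow> ('c,'u,'s) pt \<Rightarrow> ((real^'c) \<times> (real^'u)) \<Rightarrow> real^'s" where
  "d_lx_fy F' w = (\<lambda>(a,b). snd (snd (F' w (a, b, 0))))"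

definition d_x_fx :: "(('c::finite,'u::finite,'s::finite) pt \<Rightarrow> ('c,'u,'s) pt \<Rightarrow> ('c,'u,'s) pt)
    \<Rightarrow> ('c,'u,'s) pt \<Rightarrow> real^'u \<Rightarrow> real^'u" where
  "d_x_fx F' w = (\<lambda>v. fst (snd (F' w (0, v, 0))))"

definition d_ly_fx :: "(('c::finite,'u::finite,'s::finite) pt \<Rightarrow> ('c,'u,'s) pt \<Rightarrow> ('c,'u,'s) pt)
    \<Rightarrow> ('c,'u,'s) pt \<Rightarrow> ((real^'c) \<times> (real^'s)) \<Rightarrow> real^'u" where
  "d_ly_fx F' w = (\<lambda>(a,b). fst (snd (F' w (a, 0, b))))"

definition d_ly_fly :: "(('c::finite,'u::finite,'s::finite) pt \<Rightarrow> ('c,'u,'s) pt \<Rightarrow> ('c,'u,'s) pt)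
    \<Rightarrow> ('c,'u,'s) pt \<Rightarrow> ((real^'c) \<times> (real^'s)) \<Rightarrow> ((real^'c) \<times> (real^'s))" where
  "d_ly_fly F' w = (\<lambda>(a,b). let r = F' w (a, 0, b) in (fst r, snd (snd r)))"

definition d_x_fly :: "(('c::finite,'u::finite,'s::finite) pt \<Rightarrow> ('c,'u,'s) pt \<Rightarrow> ('c,'u,'s) pt)
    \<Rightarrow> ('c,'u,'s) pt \<Rightarrow> real^'u \<Rightarrow> ((real^'c) \<times> (real^'s))" where
  "d_x_fly F' w = (\<lambda>v. let r = F' w (0, v, 0) in (fst r, snd (snd r)))"

definition d_lx_flx :: "(('c::finite,'u::finite,'s::finite) pt \<Rightarrow> ('c,'u,'s) pt \<Rightarrow> ('c,'u,'s) pt)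
    \<Rightarrow> ('c,'u,'s) pt \<Rightarrow> ((real^'c) \<times> (real^'u)) \<Rightarrow> ((real^'c) \<times> (real^'u))" where
  "d_lx_flx F' w = (\<lambda>(a,b). let r = F' w (a, b, 0) in (fst r, fst (snd r)))"

definition d_y_flx :: "(('c::finite,'u::finite,'s::finite) pt \<Rightarrow> ('c,'u,'s) pt \<Rightarrow> ('c,'u,'s) pt)
    \<Rightarrow> ('c,'u,'s) pt \<Rightarrow> real^'s \<Rightarrow> ((real^'c) \<times> (real^'u))" where
  "d_y_flx F' w = (\<lambda>v. let r = F' w (0, 0, v) in (fst r, fst (snd r)))"

definition mu_s1 :: "real \<Rightarrow> real \<Rightarrow> (('c::finite,'u::finite,'s::finite) pt \<Rightarrow> ('c,'u,'s) pt \<Rightarrow> ('c,'u,'s) pt) \<Rightarrow> real" where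
  "mu_s1 R L F' = (SUP w\<in>Dom R. onorm (d_y_fy F' w) + (1/L) * onorm (d_lx_fy F' w))"

definition xi_u1P :: "real \<Rightarrow> real \<Rightarrow> (('c::finite,'u::finite,'s::finite) pt \<Rightarrow> ('c,'u,'s) pt \<Rightarrow> ('c,'u,'s) pt) \<Rightarrow> real" where
  "xi_u1P R L F' = (INF z\<in>Dom R. mset (ihull (Pset R z) (d_x_fx F')))
                    - (1/L) * (SUP w\<in>Dom R. onorm (d_ly_fx F' w))"

definition mu_cs1 :: "real \<Rightarrow> real \<Rightarrow> (('c::finite,'u::finite,'s::finite) pt \<Rightarrow> ('c,'u,'s) pt \<Rightarrow> ('c,'u,'s) pt) \<Rightarrow> real" where
  "mu_cs1 R L F' = (SUP w\<in>Dom R. onorm (d_ly_fly F' w) + L * onorm (d_x_fly F' w))"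

definition xi_cu1P :: "real \<Rightarrow> real \<Rightarrow> (('c::finite,'u::finite,'s::finite) pt \<Rightarrow> ('c,'u,'s) pt \<Rightarrow> ('c,'u,'s) pt) \<Rightarrow> real" where
  "xi_cu1P R L F' = (INF z\<in>Dom R. mset (ihull (Pset R z) (d_lx_flx F')))
                    - L * (SUP w\<in>Dom R. onorm (d_y_flx F' w))"

definition rate_conditions_0 :: "real \<Rightarrow> real \<Rightarrow> (('c::finite,'u::finite,'s::finite) pt \<Rightarrow> ('c,'u,'s) pt \<Rightarrow> ('c,'u,'s) pt) \<Rightarrow> bool" where
  "rate_conditions_0 R L F' \<longleftrightarrow>
     mu_s1 R L F' < 1 \<and> 1 < xi_u1P R L F' \<and>
     mu_cs1 R L F' < xi_u1P R L F' \<and> mu_s1 R L F' < xi_cu1P R L F'"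

definition Jcu :: "('c::finite,'u::finite,'s::finite) pt \<Rightarrow> real \<Rightarrow> ('c,'u,'s) pt set" where
  "Jcu z M = {w. norm (snd (snd w) - snd (snd z))
                   < M * norm ((fst w, fst (snd w)) - (fst z, fst (snd z)))} \<union> {z}"

text \<open>F is a lift of a map \<open>D \<rightarrow> \<Lambda> \<times> R^u \<times> R^s\<close>: integer translations in \<open>\<lambda>\<close>
change \<open>F_\<lambda>\<close> by an integer vector and leave \<open>F_x, F_y\<close> unchanged.\<close>
definition int_vec :: "real^'c \<Rightarrow> bool" where
  "int_vec k \<longleftrightarrow> (\<forall>i. k $ i \<in> \<int>)"

definition is_torus_lift :: "real \<Rightarrow> (('c::finite,'u::finite,'s::finite) pt \<Rightarrow> ('c,'u,'s) pt) \<Rightarrow> bool" where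
  "is_torus_lift R F \<longleftrightarrow> (\<forall>l x y k. int_vec k \<longrightarrow> (l, x, y) \<in> Dom R \<longrightarrow>
      int_vec (fst (F (l + k, x, y)) - fst (F (l, x, y))) \<and>
      snd (F (l + k, x, y)) = snd (F (l, x, y)))"

definition C1_on_with :: "('c::finite,'u::finite,'s::finite) pt set \<Rightarrow> (('c,'u,'s) pt \<Rightarrow> ('c,'u,'s) pt)
    \<Rightarrow> (('c,'u,'s) pt \<Rightarrow> ('c,'u,'s) pt \<Rightarrow> ('c,'u,'s) pt) \<Rightarrow> bool" where
  "C1_on_with S F F' \<longleftrightarrow> (\<forall>w\<in>S. (F has_derivative F' w) (at w within S)) \<and>
      (\<forall>i\<in>Basis. \<forall>j\<in>Basis. continuous_on S (\<lambda>w. F' w j \<bullet> i))"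

end

theory Submission
  imports Defs
begin

text \<open>Let \<open>w\<close> lie in the closed cone, so that the \<open>y\<close>-part of \<open>w - z\<close> is at most \<open>L\<close> times
  its \<open>(\<lambda>, x)\<close>-part \<open>\<Delta>\<close>. Pass from \<open>z\<close> to \<open>w\<close> first in the \<open>(\<lambda>, x)\<close>-directions and then in
  the \<open>y\<close>-direction. On the first leg the \<open>\<lambda>\<close>-displacement is at most \<open>R\<^sub>\<Lambda>\<close>, so the leg lies
  in a single set \<open>P(\<cdot>)\<close> and the interval-hull form of the mean value theorem applies; on the
  second leg the ordinary mean value inequality does. Together they bound the \<open>(\<lambda>, x)\<close>-part of
  \<open>f w - f z\<close> from below by \<open>xi_cu1P R L F' * |\<Delta>|\<close>, while the mean value inequality along the
  straight segment bounds its \<open>y\<close>-part by \<open>L * mu_s1 R L F' * |\<Delta>|\<close>. The rate condition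
  \<open>mu_s1 R L F' < xi_cu1P R L F'\<close> therefore puts \<open>f w\<close> strictly inside the cone at \<open>f z\<close>.\<close>

section \<open>Minimum norm and interval hulls\<close>

lemma mlow_nonneg: "0 \<le> mlow (A :: 'a::euclidean_space \<Rightarrow> 'b::real_normed_vector)"
proof -
  obtain v :: 'a where v: "v \<noteq> 0"
    using nonzero_Basis nonempty_Basis by blast
  have "bdd_above {c. \<forall>v. c * norm v \<le> norm (A v)}"
  proof (rule bdd_aboveI)
    fix c assume "c \<in> {c. \<forall>v. c * norm v \<le> norm (A v)}"
    then show "c \<le> norm (A v) / norm v"
      using v by (simp add: field_simps)
  qed
  then show ?thesis
    unfolding mlow_def by (rule cSup_upper[rotated]) simp
qed

lemma mlow_mult_norm_le: "mlow A * norm v \<le> norm (A v)"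
proof (cases "v = 0")
  case False
  have "mlow A \<le> norm (A v) / norm v"
    unfolding mlow_def
  proof (rule cSup_least)
    show "{c. \<forall>v. c * norm v \<le> norm (A v)} \<noteq> {}"
      by (auto intro: exI[of _ 0])
  qed (use False in \<open>auto simp: field_simps\<close>)
  then show ?thesis
    using False by (simp add: field_simps)
qed simp

lemma mset_le_mlow: "A \<in> S \<Longrightarrow> mset (S :: ('a::euclidean_space \<Rightarrow> 'b::real_normed_vector) set) \<le> mlow A"
  unfolding mset_def by (rule cINF_lower) (auto intro: mlow_nonneg bdd_belowI[where m=0])

lemma mset_nonneg: "S \<noteq> {} \<Longrightarrow> 0 \<le> mset (S :: ('a::euclidean_space \<Rightarrow> 'b::real_normed_vector) set)"
  unfolding mset_def by (rule cINF_greatest) (auto intro: mlow_nonneg)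

lemma abs_inner_Basis_le_onorm:
  fixes f :: "'a::euclidean_space \<Rightarrow> 'b::euclidean_space"
  assumes "bounded_linear f" "i \<in> Basis" "j \<in> Basis"
  shows "\<bar>f j \<bullet> i\<bar> \<le> onorm f"
  using Basis_le_norm[OF assms(2), of "f j"] onorm[OF assms(1), of j] assms(3) by simp

lemma ihull_memI:
  fixes A :: "'a::euclidean_space \<Rightarrow> 'b::euclidean_space"
  assumes lin: "linear A"
    and entry: "\<And>i j. i \<in> Basis \<Longrightarrow> j \<in> Basis \<Longrightarrow> \<exists>u\<in>U. A j \<bullet> i = G u j \<bullet> i"
    and bound: "\<And>i j u. i \<in> Basis \<Longrightarrow> j \<in> Basis \<Longrightarrow> u \<in> U \<Longrightarrow> \<bar>G u j \<bullet> i\<bar> \<le> B"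
  shows "A \<in> ihull U G"
  unfolding ihull_def
proof (intro CollectI conjI lin ballI)
  fix i :: 'b and j :: 'a assume i: "i \<in> Basis" and j: "j \<in> Basis"
  obtain u where u: "u \<in> U" "A j \<bullet> i = G u j \<bullet> i"
    using entry[OF i j] by blast
  have "bdd_below ((\<lambda>w. G w j \<bullet> i) ` U)" "bdd_above ((\<lambda>w. G w j \<bullet> i) ` U)"
    using bound[OF i j] by (force intro: bdd_belowI[where m="-B"] bdd_aboveI[where M=B])+
  then show "(INF w\<in>U. G w j \<bullet> i) \<le> A j \<bullet> i" "A j \<bullet> i \<le> (SUP w\<in>U. G w j \<bullet> i)"
    unfolding u(2) by (auto intro: cINF_lower cSUP_upper u(1))
qed

lemma mset_ihull_nonneg:
  fixes G :: "'w \<Rightarrow> 'a::euclidean_space \<Rightarrow> 'b::euclidean_space"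
  assumes "w \<in> U" "linear (G w)"
    and "\<And>i j u. i \<in> Basis \<Longrightarrow> j \<in> Basis \<Longrightarrow> u \<in> U \<Longrightarrow> \<bar>G u j \<bullet> i\<bar> \<le> B"
  shows "0 \<le> mset (ihull U G)"
proof -
  have "G w \<in> ihull U G"
    by (rule ihull_memI[OF assms(2) _ assms(3)]) (use assms(1) in auto)
  then show ?thesis
    by (intro mset_nonneg) blast
qed

lemma add_scaleR_diff_in_closed_segment:
  "t \<in> {0..1} \<Longrightarrow> a + t *\<^sub>R (b - a) \<in> closed_segment a b"
  unfolding closed_segment_image_interval
  by (rule image_eqI[of _ _ t]) (auto simp: algebra_simps)

text \<open>The mean value theorem, applied to each coordinate separately, yields one intermediate
  point per row; the matrix assembled from these rows lies in the interval hull.\<close>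
lemma ihull_mean_value_lower_bound:
  fixes g :: "'a::euclidean_space \<Rightarrow> 'b::euclidean_space"
    and G :: "'w \<Rightarrow> 'a \<Rightarrow> 'b" and \<iota> :: "'a \<Rightarrow> 'w"
  assumes deriv: "\<And>x. x \<in> closed_segment a b \<Longrightarrow>
      (g has_derivative G (\<iota> x)) (at x within closed_segment a b)"
    and hull: "\<iota> ` closed_segment a b \<subseteq> U"
    and bound: "\<And>i j u. i \<in> Basis \<Longrightarrow> j \<in> Basis \<Longrightarrow> u \<in> U \<Longrightarrow> \<bar>G u j \<bullet> i\<bar> \<le> B"
  shows "mset (ihull U G) * norm (b - a) \<le> norm (g b - g a)"
proof -
  define p where "p t = a + t *\<^sub>R (b - a)" for t
  have p_seg: "p t \<in> closed_segment a b" if "t \<in> {0..1}" for t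
    unfolding p_def by (rule add_scaleR_diff_in_closed_segment[OF that])
  have lin: "linear (G (\<iota> (p t)))" if "t \<in> {0..1}" for t
    using has_derivative_linear[OF deriv[OF p_seg[OF that]]] .
  have "\<exists>t\<in>{0<..<1}. g b \<bullet> i - g a \<bullet> i = G (\<iota> (p t)) (b - a) \<bullet> i" if "i \<in> Basis" for i
  proof -
    have "\<exists>t\<in>{0<..<1}. g (p 1) \<bullet> i - g (p 0) \<bullet> i = G (\<iota> (p t)) ((1 - 0) *\<^sub>R (b - a)) \<bullet> i"
    proof (rule mvt_simple)
      fix t :: real assume "0 \<le> t" "t \<le> 1"
      have "((\<lambda>t. g (p t)) has_derivative (\<lambda>h. G (\<iota> (p t)) (h *\<^sub>R (b - a)))) (at t within {0..1})"
        by (rule has_derivative_in_compose2[OF deriv])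
          (use p_seg \<open>0 \<le> t\<close> \<open>t \<le> 1\<close> in \<open>auto simp: p_def intro!: derivative_eq_intros\<close>)
      then show "((\<lambda>t. g (p t) \<bullet> i) has_derivative (\<lambda>h. G (\<iota> (p t)) (h *\<^sub>R (b - a)) \<bullet> i)) (at t within {0..1})"
        by (intro derivative_eq_intros) auto
    qed simp
    then show ?thesis
      by (simp add: p_def)
  qed
  then obtain T where T: "\<And>i. i \<in> Basis \<Longrightarrow> T i \<in> {0..1}"
    and T_eq: "\<And>i. i \<in> Basis \<Longrightarrow> g b \<bullet> i - g a \<bullet> i = G (\<iota> (p (T i))) (b - a) \<bullet> i"
    by (metis greaterThanLessThan_iff atLeastAtMost_iff less_imp_le)
  define A where "A v = (\<Sum>i\<in>Basis. (G (\<iota> (p (T i))) v \<bullet> i) *\<^sub>R i)" for v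
  have A_entry: "A v \<bullet> i = G (\<iota> (p (T i))) v \<bullet> i" if "i \<in> Basis" for i v
    using that by (simp add: A_def inner_sum_left inner_Basis if_distrib sum.delta cong: if_cong)
  have "linear (\<lambda>v. (G (\<iota> (p (T i))) v \<bullet> i) *\<^sub>R i)" if "i \<in> Basis" for i
    using lin[OF T[OF that]]
    by (auto intro!: linearI simp: linear_add linear_scale inner_add_left scaleR_add_left)
  then have "linear A"
    unfolding A_def[abs_def] by (intro linear_compose_sum) auto
  have "A \<in> ihull U G"
  proof (rule ihull_memI[OF \<open>linear A\<close> _ bound])
    show "\<exists>u\<in>U. A j \<bullet> i = G u j \<bullet> i" if "i \<in> Basis" for i j
      using that A_entry hull p_seg T by blast
  qed
  have "A (b - a) = g b - g a"
    by (rule euclidean_eqI) (simp add: A_entry T_eq inner_diff_left)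
  have "mset (ihull U G) * norm (b - a) \<le> mlow A * norm (b - a)"
    by (rule mult_right_mono[OF mset_le_mlow[OF \<open>A \<in> ihull U G\<close>] norm_ge_zero])
  also have "\<dots> \<le> norm (A (b - a))"
    by (rule mlow_mult_norm_le)
  finally show ?thesis
    unfolding \<open>A (b - a) = g b - g a\<close> .
qed

section \<open>Derivatives of torus lifts\<close>

lemma continuous_on_Ints_constant_on:
  fixes f :: "'a::topological_space \<Rightarrow> real"
  assumes "connected S" "continuous_on S f" "f ` S \<subseteq> \<int>"
  shows "f constant_on S"
proof (rule continuous_discrete_range_constant[OF assms(1,2)])
  fix x assume x: "x \<in> S"
  show "\<exists>e>0. \<forall>y. y \<in> S \<and> f y \<noteq> f x \<longrightarrow> e \<le> norm (f y - f x)"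
  proof (intro exI[of _ 1] conjI allI impI)
    fix y assume "y \<in> S \<and> f y \<noteq> f x"
    then have "f y - f x \<in> \<int>" "f y - f x \<noteq> 0"
      using assms(3) x by (auto intro!: Ints_diff)
    then show "1 \<le> norm (f y - f x)"
      by (simp add: Ints_nonzero_abs_ge1)
  qed simp
qed

lemma convex_Dom: "convex (Dom R)"
  unfolding Dom_def by (intro convex_Times convex_UNIV convex_cball)

lemma torus_lift_translate:
  fixes F :: "('c::finite,'u::finite,'s::finite) pt \<Rightarrow> ('c,'u,'s) pt"
  assumes lift: "is_torus_lift R F" and cont: "continuous_on (Dom R) F" and k: "int_vec k"
  obtains C where "\<And>w. w \<in> Dom R \<Longrightarrow> F (fst w + k, snd w) = F w + C"
proof -
  define \<tau> where "\<tau> w = (fst w + k, snd w)" for w :: "('c,'u,'s) pt"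
  have \<tau>_Dom: "\<tau> ` Dom R \<subseteq> Dom R"
    by (auto simp: \<tau>_def Dom_def)
  have lift_\<tau>: "int_vec (fst (F (\<tau> w)) - fst (F w)) \<and> snd (F (\<tau> w)) = snd (F w)"
    if "w \<in> Dom R" for w
    using lift k that unfolding is_torus_lift_def \<tau>_def by (metis prod.collapse)
  have "(\<lambda>w. fst (F (\<tau> w)) $ m - fst (F w) $ m) constant_on Dom R" for m
  proof (rule continuous_on_Ints_constant_on)
    show "connected (Dom R)"
      by (rule convex_connected[OF convex_Dom])
    have "continuous_on (Dom R) (\<lambda>w. F (\<tau> w))"
      by (rule continuous_on_compose2[OF cont _ \<tau>_Dom]) (auto simp: \<tau>_def intro!: continuous_intros)
    then show "continuous_on (Dom R) (\<lambda>w. fst (F (\<tau> w)) $ m - fst (F w) $ m)"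
      by (intro continuous_intros cont)
    show "(\<lambda>w. fst (F (\<tau> w)) $ m - fst (F w) $ m) ` Dom R \<subseteq> \<int>"
      using lift_\<tau> by (auto simp: int_vec_def)
  qed
  then obtain c where c: "\<And>m w. w \<in> Dom R \<Longrightarrow> fst (F (\<tau> w)) $ m - fst (F w) $ m = c m"
    unfolding constant_on_def by metis
  show ?thesis
  proof (rule that[of "((\<chi> m. c m), 0, 0)"])
    fix w :: "('c,'u,'s) pt" assume w: "w \<in> Dom R"
    have "fst (F (\<tau> w)) = fst (F w) + (\<chi> m. c m)"
      using c[OF w] by (simp add: vec_eq_iff algebra_simps)
    then show "F (fst w + k, snd w) = F w + ((\<chi> m. c m), 0, 0)"
      using lift_\<tau>[OF w] by (simp add: \<tau>_def prod_eq_iff)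
  qed
qed

lemma has_derivative_shift_invariant_eq:
  fixes f :: "'a::real_normed_vector \<Rightarrow> 'b::real_normed_vector"
  assumes S: "open S" and shift: "\<And>x. x \<in> S \<Longrightarrow> x + a \<in> S"
    and f_shift: "\<And>x. x \<in> S \<Longrightarrow> f (x + a) = f x + c"
    and deriv: "\<And>x. x \<in> S \<Longrightarrow> (f has_derivative f' x) (at x)" and v: "v \<in> S"
  shows "f' (v + a) = f' v"
proof (rule has_derivative_unique)
  have "((\<lambda>x. x + a) has_derivative (\<lambda>h. h)) (at v)"
    by (auto intro!: derivative_eq_intros)
  from has_derivative_compose[OF this deriv[OF shift[OF v]]]
  have "((\<lambda>x. f (x + a)) has_derivative f' (v + a)) (at v)"
    by simp
  then have "((\<lambda>x. f x + c) has_derivative f' (v + a)) (at v)"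
    by (rule has_derivative_transform_within_open[OF _ S v]) (use f_shift in auto)
  then show "(f has_derivative f' (v + a)) (at v)"
    using has_derivative_add_const[of "\<lambda>x. f x + c" _ _ "- c"] by simp
qed (rule deriv[OF v])

text \<open>Periodicity of the derivative is first obtained in the interior of \<open>Dom R\<close>, where
  derivatives are unique, and extends to the boundary by continuity.\<close>
lemma torus_lift_deriv_periodic:
  fixes F :: "('c::finite,'u::finite,'s::finite) pt \<Rightarrow> ('c,'u,'s) pt"
  assumes R: "0 < R" and lift: "is_torus_lift R F" and C1: "C1_on_with (Dom R) F F'"
    and k: "int_vec k" and w: "w \<in> Dom R"
  shows "F' (fst w + k, snd w) = F' w"
proof -
  have shift_eq: "v + (k, 0) = (fst v + k, snd v)" for v :: "('c,'u,'s) pt"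
    by (simp add: prod_eq_iff)
  have shift_Dom: "v + (k, 0) \<in> Dom R" if "v \<in> Dom R" for v
    using that by (auto simp: shift_eq Dom_def)
  have deriv: "\<And>v. v \<in> Dom R \<Longrightarrow> (F has_derivative F' v) (at v within Dom R)"
    using C1 unfolding C1_on_with_def by blast
  obtain C where C: "\<And>v. v \<in> Dom R \<Longrightarrow> F (v + (k, 0)) = F v + C"
    using torus_lift_translate[OF lift has_derivative_continuous_on[OF deriv] k]
    unfolding shift_eq by blast
  define D\<^sub>0 :: "('c,'u,'s) pt set" where "D\<^sub>0 = UNIV \<times> ball 0 R \<times> ball 0 R"
  have "open D\<^sub>0"
    by (simp add: D\<^sub>0_def open_Times)
  have "D\<^sub>0 \<subseteq> Dom R"
    by (auto simp: D\<^sub>0_def Dom_def)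
  have "closure D\<^sub>0 = Dom R"
    using R by (simp add: D\<^sub>0_def Dom_def closure_Times)
  have deriv_at: "(F has_derivative F' v) (at v)" if "v \<in> D\<^sub>0" for v
    using deriv[of v] at_within_open_subset[OF that \<open>open D\<^sub>0\<close> \<open>D\<^sub>0 \<subseteq> Dom R\<close>]
      that \<open>D\<^sub>0 \<subseteq> Dom R\<close> by auto
  have interior: "F' (v + (k, 0)) = F' v" if "v \<in> D\<^sub>0" for v
    by (rule has_derivative_shift_invariant_eq[where c=C, OF \<open>open D\<^sub>0\<close> _ _ deriv_at that])
      (use C in \<open>auto simp: D\<^sub>0_def Dom_def\<close>)
  have entries: "F' (w + (k, 0)) j \<bullet> i = F' w j \<bullet> i" if "i \<in> Basis" "j \<in> Basis" for i j
  proof -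
    have cont: "continuous_on (Dom R) (\<lambda>v. F' v j \<bullet> i)"
      using C1 that unfolding C1_on_with_def by blast
    have "continuous_on (closure D\<^sub>0) (\<lambda>v. F' (v + (k, 0)) j \<bullet> i - F' v j \<bullet> i)"
    proof -
      have "continuous_on (Dom R) (\<lambda>v. F' (v + (k, 0)) j \<bullet> i)"
        by (rule continuous_on_compose2[OF cont]) (auto simp: Dom_def intro: continuous_intros)
      then show ?thesis
        unfolding \<open>closure D\<^sub>0 = Dom R\<close> by (intro continuous_on_diff cont)
    qed
    then have "F' (w + (k, 0)) j \<bullet> i - F' w j \<bullet> i = 0"
      by (rule continuous_constant_on_closure) (use interior w \<open>closure D\<^sub>0 = Dom R\<close> in auto)
    then show ?thesis by simp
  qed
  have "linear (F' (w + (k, 0)))" "linear (F' w)"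
    by (rule has_derivative_linear[OF deriv[OF shift_Dom[OF w]]] has_derivative_linear[OF deriv[OF w]])+
  then have "F' (w + (k, 0)) = F' w"
    by (rule linear_eq_stdbasis) (use entries in \<open>auto intro: euclidean_eqI\<close>)
  then show ?thesis
    by (simp add: shift_eq)
qed

lemma onorm_le_sum_abs_inner_Basis:
  fixes f :: "'a::euclidean_space \<Rightarrow> 'b::euclidean_space"
  assumes "linear f"
  shows "onorm f \<le> (\<Sum>j\<in>Basis. \<Sum>i\<in>Basis. \<bar>f j \<bullet> i\<bar>)"
proof (rule onorm_le)
  fix x :: 'a
  have "f x = f (\<Sum>j\<in>Basis. (x \<bullet> j) *\<^sub>R j)"
    by (simp add: euclidean_representation)
  also have "\<dots> = (\<Sum>j\<in>Basis. (x \<bullet> j) *\<^sub>R f j)"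
    by (simp add: linear_sum[OF assms] linear_scale[OF assms])
  finally have "norm (f x) = norm (\<Sum>j\<in>Basis. (x \<bullet> j) *\<^sub>R f j)"
    by simp
  also have "\<dots> \<le> (\<Sum>j\<in>Basis. \<bar>x \<bullet> j\<bar> * norm (f j))"
    by (rule norm_sum[THEN order_trans]) simp
  also have "\<dots> \<le> (\<Sum>j\<in>Basis. norm x * (\<Sum>i\<in>Basis. \<bar>f j \<bullet> i\<bar>))"
    by (intro sum_mono mult_mono Basis_le_norm norm_le_l1) auto
  finally show "norm (f x) \<le> (\<Sum>j\<in>Basis. \<Sum>i\<in>Basis. \<bar>f j \<bullet> i\<bar>) * norm x"
    by (simp add: sum_distrib_left mult.commute)
qed

lemma Dom_translate_into_unit_box:
  assumes "w \<in> Dom R"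
  obtains k :: "real^'c::finite" where "int_vec k"
    and "(fst w + k, snd w) \<in> cbox 0 (\<chi> i. 1) \<times> cball 0 R \<times> (cball 0 R :: (real^'s::finite) set)"
proof
  define k :: "real^'c" where "k = (\<chi> m. - of_int \<lfloor>fst w $ m\<rfloor>)"
  show "int_vec k"
    by (simp add: int_vec_def k_def)
  have "(fst w + k) $ m = frac (fst w $ m)" for m
    by (simp add: k_def frac_def)
  then have "fst w + k \<in> cbox 0 (\<chi> i. 1)"
    by (simp add: mem_box_cart frac_ge_0 frac_lt_1 less_imp_le)
  then show "(fst w + k, snd w) \<in> cbox 0 (\<chi> i. 1) \<times> cball 0 R \<times> cball 0 R"
    using assms by (auto simp: Dom_def)
qed

text \<open>On the lift the domain is unbounded, so boundedness of the derivative (needed for the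
  suprema in the rate conditions to be meaningful) comes from periodicity and compactness of a
  fundamental domain.\<close>
lemma torus_lift_deriv_bounded:
  fixes F :: "('c::finite,'u::finite,'s::finite) pt \<Rightarrow> ('c,'u,'s) pt"
  assumes R: "0 < R" and lift: "is_torus_lift R F" and C1: "C1_on_with (Dom R) F F'"
  obtains B where "\<And>w. w \<in> Dom R \<Longrightarrow> onorm (F' w) \<le> B"
proof -
  define K :: "('c,'u,'s) pt set" where "K = cbox 0 (\<chi> i. 1) \<times> cball 0 R \<times> cball 0 R"
  have "K \<subseteq> Dom R"
    by (auto simp: K_def Dom_def)
  have "\<exists>b. \<forall>w\<in>Dom R. \<bar>F' w j \<bullet> i\<bar> \<le> b" if ij: "i \<in> Basis" "j \<in> Basis" for i j
  proof -
    have "continuous_on K (\<lambda>w. F' w j \<bullet> i)"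
      using C1 ij \<open>K \<subseteq> Dom R\<close> unfolding C1_on_with_def by (meson continuous_on_subset)
    then have "bounded ((\<lambda>w. F' w j \<bullet> i) ` K)"
      unfolding K_def by (intro compact_imp_bounded compact_continuous_image compact_Times compact_cbox compact_cball)
    then obtain b where b: "\<And>w. w \<in> K \<Longrightarrow> \<bar>F' w j \<bullet> i\<bar> \<le> b"
      unfolding bounded_iff by auto
    have "\<bar>F' w j \<bullet> i\<bar> \<le> b" if w: "w \<in> Dom R" for w
    proof -
      obtain k where k: "int_vec k" and "(fst w + k, snd w) \<in> K"
        using Dom_translate_into_unit_box[OF w] unfolding K_def by blast
      then show ?thesis
        using b torus_lift_deriv_periodic[OF R lift C1 k w] by metis
    qed
    then show ?thesis by blast
  qed
  then obtain b where b: "\<And>i j w. i \<in> Basis \<Longrightarrow> j \<in> Basis \<Longrightarrow> w \<in> Dom R \<Longrightarrow> \<bar>F' w j \<bullet> i\<bar> \<le> b i j"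
    by metis
  show ?thesis
  proof (rule that)
    fix w :: "('c,'u,'s) pt" assume w: "w \<in> Dom R"
    have "linear (F' w)"
      using C1 w unfolding C1_on_with_def by (meson has_derivative_linear)
    then have "onorm (F' w) \<le> (\<Sum>j\<in>Basis. \<Sum>i\<in>Basis. \<bar>F' w j \<bullet> i\<bar>)"
      by (rule onorm_le_sum_abs_inner_Basis)
    also have "\<dots> \<le> (\<Sum>j\<in>Basis. \<Sum>i\<in>Basis. b i j)"
      using b w by (intro sum_mono) auto
    finally show "onorm (F' w) \<le> (\<Sum>j\<in>Basis. \<Sum>i\<in>Basis. b i j)" .
  qed
qed

section \<open>Blocks of the derivative and the cone\<close>

definition proj_cu :: "('c::finite,'u::finite,'s::finite) pt \<Rightarrow> (real^'c) \<times> (real^'u)" where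
  "proj_cu w = (fst w, fst (snd w))"

definition proj_s :: "('c::finite,'u::finite,'s::finite) pt \<Rightarrow> real^'s" where
  "proj_s w = snd (snd w)"

definition emb_cu :: "(real^'c) \<times> (real^'u) \<Rightarrow> ('c::finite,'u::finite,'s::finite) pt" where
  "emb_cu v = (fst v, snd v, 0)"

definition emb_s :: "real^'s \<Rightarrow> ('c::finite,'u::finite,'s::finite) pt" where
  "emb_s v = (0, 0, v)"

lemma bounded_linear_proj_cu: "bounded_linear proj_cu"
  unfolding proj_cu_def[abs_def]
  by (intro bounded_linear_Pair bounded_linear_fst bounded_linear_compose[OF bounded_linear_fst bounded_linear_snd])

lemma bounded_linear_proj_s: "bounded_linear proj_s"
  unfolding proj_s_def[abs_def] by (intro bounded_linear_compose[OF bounded_linear_snd bounded_linear_snd])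

lemma bounded_linear_emb_cu: "bounded_linear emb_cu"
  unfolding emb_cu_def[abs_def] by (intro bounded_linear_Pair bounded_linear_fst bounded_linear_snd bounded_linear_zero)

lemma bounded_linear_emb_s: "bounded_linear emb_s"
  unfolding emb_s_def[abs_def] by (intro bounded_linear_Pair bounded_linear_ident bounded_linear_zero)

lemma norm_proj_cu_le: "norm (proj_cu w) \<le> norm w"
  by (cases w) (simp add: proj_cu_def norm_Pair real_sqrt_le_mono)

lemma norm_proj_s_le: "norm (proj_s w) \<le> norm w"
  by (cases w) (simp add: proj_s_def norm_Pair real_le_rsqrt)

lemma norm_emb_cu: "norm (emb_cu v) = norm v"
  by (cases v) (simp add: emb_cu_def norm_Pair)

lemma norm_emb_s: "norm (emb_s v) = norm v"
  by (simp add: emb_s_def norm_Pair)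

lemma emb_cu_proj_cu_add_emb_s_proj_s: "emb_cu (proj_cu w) + emb_s (proj_s w) = w"
  by (simp add: emb_cu_def emb_s_def proj_cu_def proj_s_def)

lemma proj_cu_proj_s_eq_iff: "w = z \<longleftrightarrow> proj_cu w = proj_cu z \<and> proj_s w = proj_s z"
  by (auto simp: proj_cu_def proj_s_def prod_eq_iff)

lemma d_lx_flx_eq: "d_lx_flx F' w = proj_cu \<circ> F' w \<circ> emb_cu"
  by (auto simp: fun_eq_iff d_lx_flx_def proj_cu_def emb_cu_def Let_def)

lemma d_y_flx_eq: "d_y_flx F' w = proj_cu \<circ> F' w \<circ> emb_s"
  by (auto simp: fun_eq_iff d_y_flx_def proj_cu_def emb_s_def Let_def)

lemma d_lx_fy_eq: "d_lx_fy F' w = proj_s \<circ> F' w \<circ> emb_cu"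
  by (auto simp: fun_eq_iff d_lx_fy_def proj_s_def emb_cu_def)

lemma d_y_fy_eq: "d_y_fy F' w = proj_s \<circ> F' w \<circ> emb_s"
  by (auto simp: fun_eq_iff d_y_fy_def proj_s_def emb_s_def)

lemma onorm_compose_nonexpanding_le:
  fixes E :: "'a::{real_normed_vector, perfect_space} \<Rightarrow> 'b::real_normed_vector"
    and A :: "'b \<Rightarrow> 'c::real_normed_vector" and P :: "'c \<Rightarrow> 'd::real_normed_vector"
  assumes A: "bounded_linear A"
    and P: "\<And>v. norm (P v) \<le> norm v" and E: "\<And>v. norm (E v) \<le> norm v"
  shows "onorm (P \<circ> A \<circ> E) \<le> onorm A"
proof (rule onorm_le)
  fix v
  have "norm ((P \<circ> A \<circ> E) v) \<le> norm (A (E v))"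
    using P by simp
  also have "\<dots> \<le> onorm A * norm (E v)"
    by (rule onorm[OF A])
  also have "\<dots> \<le> onorm A * norm v"
    by (rule mult_left_mono[OF E onorm_pos_le[OF A]])
  finally show "norm ((P \<circ> A \<circ> E) v) \<le> onorm A * norm v" .
qed

lemma
  fixes F' :: "('c::finite,'u::finite,'s::finite) pt \<Rightarrow> ('c,'u,'s) pt \<Rightarrow> ('c,'u,'s) pt"
  assumes "bounded_linear (F' w)"
  shows bounded_linear_d_lx_flx: "bounded_linear (d_lx_flx F' w)"
    and bounded_linear_d_y_flx: "bounded_linear (d_y_flx F' w)"
    and bounded_linear_d_lx_fy: "bounded_linear (d_lx_fy F' w)"
    and bounded_linear_d_y_fy: "bounded_linear (d_y_fy F' w)"
    and onorm_d_lx_flx_le: "onorm (d_lx_flx F' w) \<le> onorm (F' w)"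
    and onorm_d_y_flx_le: "onorm (d_y_flx F' w) \<le> onorm (F' w)"
    and onorm_d_lx_fy_le: "onorm (d_lx_fy F' w) \<le> onorm (F' w)"
    and onorm_d_y_fy_le: "onorm (d_y_fy F' w) \<le> onorm (F' w)"
proof -
  have emb: "\<And>v. norm (emb_cu v) \<le> norm v" "\<And>v. norm (emb_s v) \<le> norm v"
    by (simp_all add: norm_emb_cu norm_emb_s)
  show "bounded_linear (d_lx_flx F' w)" "bounded_linear (d_y_flx F' w)"
    "bounded_linear (d_lx_fy F' w)" "bounded_linear (d_y_fy F' w)"
    unfolding d_lx_flx_eq d_y_flx_eq d_lx_fy_eq d_y_fy_eq comp_def
    by (intro bounded_linear_compose[OF bounded_linear_proj_cu] bounded_linear_compose[OF bounded_linear_proj_s]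
        bounded_linear_compose[OF assms] bounded_linear_emb_cu bounded_linear_emb_s)+
  show "onorm (d_lx_flx F' w) \<le> onorm (F' w)" "onorm (d_y_flx F' w) \<le> onorm (F' w)"
    "onorm (d_lx_fy F' w) \<le> onorm (F' w)" "onorm (d_y_fy F' w) \<le> onorm (F' w)"
    unfolding d_lx_flx_eq d_y_flx_eq d_lx_fy_eq d_y_fy_eq
    by (intro onorm_compose_nonexpanding_le[OF assms] norm_proj_cu_le norm_proj_s_le emb)+
qed

lemma proj_s_linear_split:
  assumes "linear A"
  shows "proj_s (A v) = (proj_s \<circ> A \<circ> emb_cu) (proj_cu v) + (proj_s \<circ> A \<circ> emb_s) (proj_s v)"
proof -
  have "A v = A (emb_cu (proj_cu v)) + A (emb_s (proj_s v))"
    using linear_add[OF assms, of "emb_cu (proj_cu v)" "emb_s (proj_s v)"]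
    by (simp add: emb_cu_proj_cu_add_emb_s_proj_s)
  then show ?thesis
    by (simp add: proj_s_def)
qed

lemma Jcu_iff: "w \<in> Jcu z M \<longleftrightarrow> w = z \<or> norm (proj_s w - proj_s z) < M * norm (proj_cu w - proj_cu z)"
  by (auto simp: Jcu_def proj_cu_def proj_s_def)

lemma closure_Jcu_subset:
  assumes "0 \<le> M"
  shows "closure (Jcu z M) \<subseteq> {w. norm (proj_s w - proj_s z) \<le> M * norm (proj_cu w - proj_cu z)}"
proof (rule closure_minimal)
  show "Jcu z M \<subseteq> {w. norm (proj_s w - proj_s z) \<le> M * norm (proj_cu w - proj_cu z)}"
    using assms by (auto simp: Jcu_iff less_imp_le)
  show "closed {w. norm (proj_s w - proj_s z) \<le> M * norm (proj_cu w - proj_cu z)}"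
    unfolding proj_cu_def proj_s_def by (intro closed_Collect_le continuous_intros)
qed

lemma Pset_subset_Dom: "Pset R z \<subseteq> Dom R"
  by (auto simp: Pset_def)

section \<open>Invariance of the center-unstable cone\<close>

lemma has_derivative_segment_within:
  fixes f :: "'a::real_normed_vector \<Rightarrow> 'b::real_normed_vector"
  assumes "convex S" "\<And>x. x \<in> S \<Longrightarrow> (f has_derivative f' x) (at x within S)"
    and "a \<in> S" "b \<in> S" "t \<in> {0..1}"
  shows "((\<lambda>t. f (a + t *\<^sub>R (b - a))) has_derivative (\<lambda>h. f' (a + t *\<^sub>R (b - a)) (h *\<^sub>R (b - a))))
           (at t within {0..1})"
proof (rule has_derivative_in_compose2[OF assms(2) _ assms(5)])
  show "(\<lambda>t. a + t *\<^sub>R (b - a)) ` {0..1} \<subseteq> S"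
    using add_scaleR_diff_in_closed_segment closed_segment_subset[OF assms(3,4,1)] by blast
qed (auto intro!: derivative_eq_intros)

locale C1_bounded_derivative =
  fixes R :: real
    and F :: "('c::finite,'u::finite,'s::finite) pt \<Rightarrow> ('c,'u,'s) pt"
    and F' :: "('c,'u,'s) pt \<Rightarrow> ('c,'u,'s) pt \<Rightarrow> ('c,'u,'s) pt"
    and B :: real
  assumes C1: "C1_on_with (Dom R) F F'"
    and onorm_deriv_le: "\<And>w. w \<in> Dom R \<Longrightarrow> onorm (F' w) \<le> B"
begin

lemma deriv: "w \<in> Dom R \<Longrightarrow> (F has_derivative F' w) (at w within Dom R)"
  using C1 unfolding C1_on_with_def by blast

lemma bounded_linear_deriv: "w \<in> Dom R \<Longrightarrow> bounded_linear (F' w)"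
  using deriv has_derivative_bounded_linear by blast

lemma mu_s1_upper:
  assumes "0 < L" "w \<in> Dom R"
  shows "onorm (d_y_fy F' w) + (1/L) * onorm (d_lx_fy F' w) \<le> mu_s1 R L F'"
  unfolding mu_s1_def
proof (rule cSUP_upper[OF assms(2)])
  show "bdd_above ((\<lambda>u. onorm (d_y_fy F' u) + (1/L) * onorm (d_lx_fy F' u)) ` Dom R)"
  proof (rule bdd_aboveI2)
    fix u :: "('c,'u,'s) pt" assume u: "u \<in> Dom R"
    have "onorm (d_y_fy F' u) \<le> B" "onorm (d_lx_fy F' u) \<le> B"
      using onorm_d_y_fy_le[of F' u] onorm_d_lx_fy_le[of F' u] bounded_linear_deriv[OF u]
        onorm_deriv_le[OF u] by linarith+
    then show "onorm (d_y_fy F' u) + (1/L) * onorm (d_lx_fy F' u) \<le> B + (1/L) * B"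
      using assms(1) by (intro add_mono mult_left_mono) simp_all
  qed
qed

lemma onorm_d_y_flx_le_Sup:
  assumes "w \<in> Dom R"
  shows "onorm (d_y_flx F' w) \<le> (SUP u\<in>Dom R. onorm (d_y_flx F' u))"
proof (rule cSUP_upper[OF assms])
  show "bdd_above ((\<lambda>u. onorm (d_y_flx F' u)) ` Dom R)"
  proof (rule bdd_aboveI2)
    fix u :: "('c,'u,'s) pt" assume u: "u \<in> Dom R"
    show "onorm (d_y_flx F' u) \<le> B"
      using onorm_d_y_flx_le[of F' u] bounded_linear_deriv[OF u] onorm_deriv_le[OF u] by linarith
  qed
qed

lemma abs_inner_d_lx_flx_le:
  assumes "w \<in> Dom R" "i \<in> Basis" "j \<in> Basis"
  shows "\<bar>d_lx_flx F' w j \<bullet> i\<bar> \<le> B"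
  using abs_inner_Basis_le_onorm[OF bounded_linear_d_lx_flx[of F' w, OF bounded_linear_deriv] assms(2,3)]
    onorm_d_lx_flx_le[of F' w, OF bounded_linear_deriv] onorm_deriv_le assms(1)
  by fastforce

lemma Inf_mset_ihull_le:
  assumes "w \<in> Dom R"
  shows "(INF z\<in>Dom R. mset (ihull (Pset R z) (d_lx_flx F'))) \<le> mset (ihull (Pset R w) (d_lx_flx F'))"
proof (rule cINF_lower[OF bdd_belowI2 assms])
  fix z :: "('c,'u,'s) pt" assume z: "z \<in> Dom R"
  show "0 \<le> mset (ihull (Pset R z) (d_lx_flx F'))"
  proof (rule mset_ihull_nonneg)
    show "z \<in> Pset R z"
      using z by (simp add: Pset_def)
    show "linear (d_lx_flx F' z)"
      using bounded_linear_d_lx_flx[of F' z, OF bounded_linear_deriv[OF z]] by (rule bounded_linear.linear)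
    show "\<bar>d_lx_flx F' u j \<bullet> i\<bar> \<le> B" if "i \<in> Basis" "j \<in> Basis" "u \<in> Pset R z" for i j u
      using abs_inner_d_lx_flx_le Pset_subset_Dom that by blast
  qed
qed

text \<open>The \<open>\<lambda>\<close>-components of the segment stay within \<open>1/4 = R\<^sub>\<Lambda>/2\<close> of their midpoint,
  so the whole segment lies in the single set \<open>Pset R (m, 0, 0)\<close>.\<close>
lemma expansion_along_cu:
  fixes l l' :: "real^'c" and x x' :: "real^'u" and y :: "real^'s"
  assumes "(l, x, y) \<in> Dom R" "(l', x', y) \<in> Dom R" "dist l l' \<le> 1/2"
  shows "(INF z\<in>Dom R. mset (ihull (Pset R z) (d_lx_flx F'))) * norm ((l', x') - (l, x))
           \<le> norm (proj_cu (F (l', x', y)) - proj_cu (F (l, x, y)))"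
proof -
  define \<iota> :: "(real^'c) \<times> (real^'u) \<Rightarrow> ('c,'u,'s) pt" where "\<iota> q = (fst q, snd q, y)" for q
  define m where "m = midpoint l l'"
  have "0 \<le> R"
    using assms(1) by (auto simp: Dom_def intro: order_trans[OF norm_ge_zero])
  have seg: "closed_segment (l, x) (l', x') \<subseteq> cball m (1/4) \<times> cball 0 R"
    by (rule closed_segment_subset)
      (use assms in \<open>auto simp: Dom_def m_def dist_midpoint intro!: convex_Times convex_cball\<close>)
  then have \<iota>_Dom: "\<iota> ` closed_segment (l, x) (l', x') \<subseteq> Dom R"
    using assms(1) by (auto simp: \<iota>_def Dom_def)
  have hull_bound: "mset (ihull (Pset R (m, 0, 0)) (d_lx_flx F')) * norm ((l', x') - (l, x))
          \<le> norm (proj_cu (F (\<iota> (l', x'))) - proj_cu (F (\<iota> (l, x))))"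
  proof (rule ihull_mean_value_lower_bound[where g="\<lambda>q. proj_cu (F (\<iota> q))"])
    fix q assume q: "q \<in> closed_segment (l, x) (l', x')"
    have "((\<lambda>q. F (\<iota> q)) has_derivative (\<lambda>h. F' (\<iota> q) (emb_cu h)))
            (at q within closed_segment (l, x) (l', x'))"
      by (rule has_derivative_in_compose2[OF deriv \<iota>_Dom q])
        (auto simp: \<iota>_def[abs_def] emb_cu_def intro!: derivative_eq_intros)
    then show "((\<lambda>q. proj_cu (F (\<iota> q))) has_derivative d_lx_flx F' (\<iota> q))
                 (at q within closed_segment (l, x) (l', x'))"
      unfolding d_lx_flx_eq comp_def
      by (rule bounded_linear.has_derivative[OF bounded_linear_proj_cu])
  next
    show "\<iota> ` closed_segment (l, x) (l', x') \<subseteq> Pset R (m, 0, 0)"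
      using seg \<iota>_Dom by (auto simp: Pset_def \<iota>_def dist_norm norm_minus_commute)
  next
    show "\<bar>d_lx_flx F' u j \<bullet> i\<bar> \<le> B" if "i \<in> Basis" "j \<in> Basis" "u \<in> Pset R (m, 0, 0)" for i j u
      using abs_inner_d_lx_flx_le Pset_subset_Dom that by blast
  qed
  have "(INF z\<in>Dom R. mset (ihull (Pset R z) (d_lx_flx F'))) \<le> mset (ihull (Pset R (m, 0, 0)) (d_lx_flx F'))"
    by (rule Inf_mset_ihull_le) (use \<open>0 \<le> R\<close> in \<open>simp add: Dom_def\<close>)
  from order_trans[OF mult_right_mono[OF this norm_ge_zero] hull_bound]
  show ?thesis
    by (simp add: \<iota>_def)
qed

lemma variation_along_s:
  fixes l :: "real^'c" and x :: "real^'u" and y y' :: "real^'s"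
  assumes "(l, x, y) \<in> Dom R" "(l, x, y') \<in> Dom R"
  shows "norm (proj_cu (F (l, x, y')) - proj_cu (F (l, x, y)))
           \<le> (SUP u\<in>Dom R. onorm (d_y_flx F' u)) * norm (y' - y)"
proof (rule differentiable_bound[OF convex_cball])
  fix v :: "real^'s" assume v: "v \<in> cball 0 R"
  then have lxv: "(l, x, v) \<in> Dom R"
    using assms(1) by (simp add: Dom_def)
  have "((\<lambda>v. F (l, x, v)) has_derivative (\<lambda>h. F' (l, x, v) (emb_s h))) (at v within cball 0 R)"
    by (rule has_derivative_in_compose2[OF deriv _ v]) 
      (use assms(1) in \<open>auto simp: Dom_def emb_s_def intro!: derivative_eq_intros\<close>)
  then show "((\<lambda>v. proj_cu (F (l, x, v))) has_derivative d_y_flx F' (l, x, v)) (at v within cball 0 R)"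
    unfolding d_y_flx_eq comp_def
    by (rule bounded_linear.has_derivative[OF bounded_linear_proj_cu])
  show "onorm (d_y_flx F' (l, x, v)) \<le> (SUP u\<in>Dom R. onorm (d_y_flx F' u))"
    by (rule onorm_d_y_flx_le_Sup[OF lxv])
qed (use assms in \<open>auto simp: Dom_def\<close>)

lemma cu_variation_ge_xi_cu1P:
  assumes z: "z \<in> Dom R" and w: "w \<in> Dom R" and near: "dist (fst z) (fst w) \<le> 1/2"
    and cone: "norm (proj_s w - proj_s z) \<le> L * norm (proj_cu w - proj_cu z)"
  shows "xi_cu1P R L F' * norm (proj_cu w - proj_cu z) \<le> norm (proj_cu (F w) - proj_cu (F z))"
proof -
  obtain l x y where z_eq: "z = (l, x, y)"
    using prod_cases3 by blast
  obtain l' x' y' where w_eq: "w = (l', x', y')"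
    using prod_cases3 by blast
  define z' where "z' = (l', x', y)"
  define Sy where "Sy = (SUP u\<in>Dom R. onorm (d_y_flx F' u))"
  have "z' \<in> Dom R"
    using z w by (simp add: z_eq w_eq z'_def Dom_def)
  have "0 \<le> Sy"
    using onorm_pos_le[OF bounded_linear_d_y_flx[of F' z, OF bounded_linear_deriv[OF z]]]
      onorm_d_y_flx_le_Sup[OF z] unfolding Sy_def by linarith
  have leg1: "(INF z\<in>Dom R. mset (ihull (Pset R z) (d_lx_flx F'))) * norm (proj_cu w - proj_cu z)
                \<le> norm (proj_cu (F z') - proj_cu (F z))"
    using expansion_along_cu[of l x y l' x'] z w near
    by (simp add: z_eq w_eq z'_def Dom_def proj_cu_def)
  have "norm (proj_cu (F w) - proj_cu (F z')) \<le> Sy * norm (proj_s w - proj_s z)"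
    using variation_along_s[of l' x' y y'] z w
    by (simp add: z_eq w_eq z'_def Dom_def proj_s_def Sy_def)
  also have "\<dots> \<le> Sy * (L * norm (proj_cu w - proj_cu z))"
    by (rule mult_left_mono[OF cone \<open>0 \<le> Sy\<close>])
  finally have leg2: "norm (proj_cu (F w) - proj_cu (F z')) \<le> L * Sy * norm (proj_cu w - proj_cu z)"
    by (simp add: algebra_simps)
  have "norm (proj_cu (F z') - proj_cu (F z))
          \<le> norm (proj_cu (F w) - proj_cu (F z)) + norm (proj_cu (F w) - proj_cu (F z'))"
    using norm_triangle_ineq4[of "proj_cu (F w) - proj_cu (F z)" "proj_cu (F w) - proj_cu (F z')"]
    by simp
  then show ?thesis
    using leg1 leg2 unfolding xi_cu1P_def Sy_def by (simp add: algebra_simps)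
qed

lemma norm_proj_s_deriv_le_mu_s1:
  assumes L: "0 < L" and q: "q \<in> Dom R"
    and cone: "norm (proj_s v) \<le> L * norm (proj_cu v)"
  shows "norm (proj_s (F' q v)) \<le> L * mu_s1 R L F' * norm (proj_cu v)"
proof -
  have bl: "bounded_linear (d_lx_fy F' q)" "bounded_linear (d_y_fy F' q)"
    using bounded_linear_d_lx_fy bounded_linear_d_y_fy bounded_linear_deriv[OF q] by blast+
  have "norm (proj_s (F' q v)) \<le> norm (d_lx_fy F' q (proj_cu v)) + norm (d_y_fy F' q (proj_s v))"
    using proj_s_linear_split[OF bounded_linear.linear[OF bounded_linear_deriv[OF q]], of v]
    by (simp add: d_lx_fy_eq d_y_fy_eq norm_triangle_ineq)
  also have "\<dots> \<le> onorm (d_lx_fy F' q) * norm (proj_cu v) + onorm (d_y_fy F' q) * (L * norm (proj_cu v))"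
    using onorm[OF bl(1), of "proj_cu v"] onorm[OF bl(2), of "proj_s v"]
      mult_left_mono[OF cone onorm_pos_le[OF bl(2)]] by linarith
  also have "\<dots> = L * (onorm (d_y_fy F' q) + (1/L) * onorm (d_lx_fy F' q)) * norm (proj_cu v)"
    using L by (simp add: field_simps)
  also have "\<dots> \<le> L * mu_s1 R L F' * norm (proj_cu v)"
    using mu_s1_upper[OF L q] L by (intro mult_right_mono mult_left_mono) auto
  finally show ?thesis .
qed

lemma s_variation_le_mu_s1:
  assumes L: "0 < L" and z: "z \<in> Dom R" and w: "w \<in> Dom R"
    and cone: "norm (proj_s w - proj_s z) \<le> L * norm (proj_cu w - proj_cu z)"
  shows "norm (proj_s (F w) - proj_s (F z)) \<le> L * mu_s1 R L F' * norm (proj_cu w - proj_cu z)"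
proof -
  define p where "p t = z + t *\<^sub>R (w - z)" for t
  define d where "d t = proj_s (F' (p t) (w - z))" for t
  have p_Dom: "p t \<in> Dom R" if "t \<in> {0..1}" for t
    using add_scaleR_diff_in_closed_segment[OF that] closed_segment_subset[OF z w convex_Dom]
    unfolding p_def by blast
  have "proj_cu (w - z) = proj_cu w - proj_cu z" "proj_s (w - z) = proj_s w - proj_s z"
    by (simp_all add: proj_cu_def proj_s_def)
  have "norm (proj_s (F (p 1)) - proj_s (F (p 0)))
          \<le> (L * mu_s1 R L F' * norm (proj_cu w - proj_cu z)) * norm (1 - 0 :: real)"
  proof (rule differentiable_bound[where f'="\<lambda>t h. h *\<^sub>R d t", OF convex_real_interval(5)])
    fix t :: real assume t: "t \<in> {0..1}"
    have lin: "linear (F' (p t))"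
      using bounded_linear_deriv[OF p_Dom[OF t]] by (rule bounded_linear.linear)
    have "((\<lambda>t. proj_s (F (p t))) has_derivative (\<lambda>h. proj_s (F' (p t) (h *\<^sub>R (w - z)))))
            (at t within {0..1})"
      using bounded_linear.has_derivative[OF bounded_linear_proj_s
          has_derivative_segment_within[OF convex_Dom deriv z w t]]
      by (simp add: p_def)
    then show "((\<lambda>t. proj_s (F (p t))) has_derivative (\<lambda>h. h *\<^sub>R d t)) (at t within {0..1})"
      by (rule has_derivative_eq_rhs) (simp add: fun_eq_iff d_def linear_scale[OF lin] proj_s_def)
    have "norm (d t) \<le> L * mu_s1 R L F' * norm (proj_cu w - proj_cu z)"
      using norm_proj_s_deriv_le_mu_s1[OF L p_Dom[OF t], of "w - z"] cone
      unfolding d_def \<open>proj_cu (w - z) = proj_cu w - proj_cu z\<close> \<open>proj_s (w - z) = proj_s w - proj_s z\<close>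
      by blast
    then show "onorm (\<lambda>h. h *\<^sub>R d t) \<le> L * mu_s1 R L F' * norm (proj_cu w - proj_cu z)"
      using onorm_scaleR_left[OF bounded_linear_ident, of "d t"] by (simp add: onorm_id)
  qed auto
  then show ?thesis
    by (simp add: p_def)
qed

lemma cone_maps_into_cone:
  assumes L: "0 < L" and rate: "mu_s1 R L F' < xi_cu1P R L F'"
    and z: "z \<in> Dom R" and w: "w \<in> Dom R" and near: "dist (fst z) (fst w) \<le> 1/2"
    and w_cone: "w \<in> closure (Jcu z L)"
  shows "F w \<in> Jcu (F z) L"
proof (cases "w = z")
  case False
  have cone: "norm (proj_s w - proj_s z) \<le> L * norm (proj_cu w - proj_cu z)"
    using closure_Jcu_subset[of L z] L w_cone by auto
  then have "proj_cu w \<noteq> proj_cu z"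
    using False L by (auto simp: proj_cu_proj_s_eq_iff)
  then have "L * mu_s1 R L F' * norm (proj_cu w - proj_cu z) < L * xi_cu1P R L F' * norm (proj_cu w - proj_cu z)"
    using L rate by simp
  also have "\<dots> \<le> L * norm (proj_cu (F w) - proj_cu (F z))"
    using cu_variation_ge_xi_cu1P[OF z w near cone] L by (simp add: mult.assoc)
  finally show ?thesis
    using s_variation_le_mu_s1[OF L z w cone] by (simp add: Jcu_iff)
qed (simp add: Jcu_iff)

end

theorem corollary4p2:
  fixes F :: "('c::finite,'u::finite,'s::finite) pt \<Rightarrow> ('c,'u,'s) pt"
    and F' :: "('c,'u,'s) pt \<Rightarrow> ('c,'u,'s) pt \<Rightarrow> ('c,'u,'s) pt"
    and R L :: real
  assumes R: "0 < R" "R < 1/4"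
    and L: "2 * R / (1/2) < L" "L < 1"
    and lift: "is_torus_lift R F"
    and C1: "C1_on_with (Dom R) F F'"
    and rate: "rate_conditions_0 R L F'"
    and z: "z \<in> Dom R"
  shows "F ` (closure (Jcu z L) \<inter> (cball (fst z) (1/2) \<times> cball 0 R \<times> cball 0 R))
           \<subseteq> Jcu (F z) L"
proof
  obtain B where "\<And>w. w \<in> Dom R \<Longrightarrow> onorm (F' w) \<le> B"
    using torus_lift_deriv_bounded[OF R(1) lift C1] by blast
  then interpret C1_bounded_derivative R F F' B
    using C1 by unfold_locales
  fix v assume "v \<in> F ` (closure (Jcu z L) \<inter> (cball (fst z) (1/2) \<times> cball 0 R \<times> cball 0 R))"
  then obtain w where w: "w \<in> closure (Jcu z L)" "w \<in> cball (fst z) (1/2) \<times> cball 0 R \<times> cball 0 R"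
    and v: "v = F w"
    by blast
  have "0 < L"
    using R L by simp
  moreover have "mu_s1 R L F' < xi_cu1P R L F'"
    using rate by (simp add: rate_conditions_0_def)
  moreover have "w \<in> Dom R" "dist (fst z) (fst w) \<le> 1/2"
    using w(2) by (auto simp: Dom_def)
  ultimately show "v \<in> Jcu (F z) L"
    using cone_maps_into_cone z w(1) v by blast
qed

end
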